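(* Let $d=1$ and $\lambda>0$. Let $\mathcal{E}$ be a Poisson point process on $\mathbb{R}$ with intensity $\lambda\,\mathrm{Leb}_1$ and, conditionally on $\mathcal{E}$, let $\{(B^x_s)_{s\ge 0}: x\in\mathcal{E}\}$ be independent one-dimensional Brownian motions with $B^x_0=x$ (with $(B^x_s-x)_{s\geq 0}$ independent of $\mathcal{E}$). For $t\ge 0$ let $\mathcal{O}_t=\bigcup_{x\in\mathcal{E}}\{B^x_s: 0\le s\le t\}$. Then for every $t\ge 0$, almost surely $\mathcal{O}_t$ has no unbounded cluster.
   Context: Two points are connected in a set $A$ if there is a continuous path $\gamma:[0,1]\to A$ joining them; a cluster of $A$ is a maximal connected subset of $A$; a cluster is bounded if it is contained in some ball $\{y:\|y\|<R\}$, and unbounded otherwise. *)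

theory Defs
  imports "HOL-Probability.Probability"
begin

text \<open>Poisson point process on a measurable space S with intensity measure mu,
  realised on the probability space M as a random (locally finite) set of points
  Phi :: 'w => 's set.\<close>
definition poisson_point_process ::
  "'w measure \<Rightarrow> 's measure \<Rightarrow> 's measure \<Rightarrow> ('w \<Rightarrow> 's set) \<Rightarrow> bool" where
  "poisson_point_process M S \<mu> \<Phi> \<longleftrightarrow>
     prob_space M \<and> sets \<mu> = sets S \<and>
     (\<forall>A\<in>sets S. emeasure \<mu> A < \<infinity> \<longrightarrow>
        (AE \<omega> in M. finite (\<Phi> \<omega> \<inter> A)) \<and>
        (\<lambda>\<omega>. card (\<Phi> \<omega> \<inter> A)) \<in> measurable M (count_space UNIV) \<and>
        (\<forall>k::nat. measure M {\<omega>\<in>space M. card (\<Phi> \<omega> \<inter> A) = k}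
                   = measure \<mu> A ^ k / fact k * exp (- measure \<mu> A))) \<and>
     (\<forall>(I::nat set) A. finite I \<longrightarrow> A ` I \<subseteq> sets S \<longrightarrow>
        (\<forall>i\<in>I. emeasure \<mu> (A i) < \<infinity>) \<longrightarrow> disjoint_family_on A I \<longrightarrow>
        prob_space.indep_vars M (\<lambda>_. count_space UNIV)
          (\<lambda>i \<omega>. card (\<Phi> \<omega> \<inter> A i)) I)"

text \<open>Law of a one-dimensional standard Brownian motion started at 0 (Wiener measure),
  as a probability measure on the product sigma-algebra of real => real:
  w 0 = 0 a.s. and increments over consecutive intervals of [0, oo) are
  independent centred Gaussians with variance equal to the interval length.
  (Path continuity is not measurable here and is imposed separately.)\<close>
definition brownian_law :: "(real \<Rightarrow> real) measure \<Rightarrow> bool" where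
  "brownian_law W \<longleftrightarrow>
     prob_space W \<and> sets W = sets (PiM UNIV (\<lambda>_::real. borel)) \<and>
     (AE w in W. w 0 = 0) \<and>
     (\<forall>(n::nat) (t::nat \<Rightarrow> real). 0 \<le> t 0 \<and> (\<forall>i<n. t i < t (Suc i)) \<longrightarrow>
        prob_space.indep_vars W (\<lambda>_. borel) (\<lambda>i w. w (t (Suc i)) - w (t i)) {..<n} \<and>
        (\<forall>i<n. distributed W lborel (\<lambda>w. w (t (Suc i)) - w (t i))
                  (\<lambda>x. ennreal (normal_density 0 (sqrt (t (Suc i) - t i)) x))))"

text \<open>The occupied set O_t: union of the ranges up to time t of the paths
  B^x_s = x + w s, over all marked points (x, w).\<close>
definition occupied :: "(real \<times> (real \<Rightarrow> real)) set \<Rightarrow> real \<Rightarrow> real set" where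
  "occupied P t = (\<Union>(x, w)\<in>P. (\<lambda>s. x + w s) ` {0..t})"

text \<open>A cluster of A is a path-connected component (path_component_set A y, y in A).\<close>
definition has_unbounded_cluster :: "real set \<Rightarrow> bool" where
  "has_unbounded_cluster A \<longleftrightarrow> (\<exists>y\<in>A. \<not> bounded (path_component_set A y))"

end

theory Submission
  imports Defs
begin

text \<open>
  A dyadic chaining bound sup_majorant T w dominates \<bar>w s\<bar> for s \<le> T whenever w is continuous,
  and has finite expectation under Wiener measure by the Gaussian fourth moment. So a particle
  started at x can visit y by time t only if \<bar>y - x\<bar> \<le> sup_majorant (t + 1) w. Such particles
  with \<bar>y - x\<bar> \<le> R form a Poisson set of intensity at most a constant c, those with \<bar>y - x\<bar> > R
  one of intensity tending to 0 as R grows. For n points spaced more than 2R apart the near sets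
  are disjoint, hence independent, so all n points are occupied with probability at most
  (1 - e^-c)^n plus n times the far intensity, which can be made arbitrarily small. Almost surely,
  then, the complement of O_t is unbounded on both sides, and every cluster, being an interval,
  is bounded.
\<close>

section \<open>A dyadic majorant for the supremum of a path\<close>

definition dyadic_point :: "real \<Rightarrow> nat \<Rightarrow> nat \<Rightarrow> real" where
  "dyadic_point T n k = real k * T / 2 ^ n"

definition dyadic_increment :: "real \<Rightarrow> nat \<Rightarrow> nat \<Rightarrow> (real \<Rightarrow> real) \<Rightarrow> real" where
  "dyadic_increment T n j w = w (dyadic_point T n (Suc j)) - w (dyadic_point T n j)"

text \<open>The weights come from \<bar>x\<bar> \<le> a + x^4/a^3 with a = (4/5)^n; the expected level term is
  (4/5)^n + 3 T^2 (125/128)^n, which is summable.\<close>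

definition level_majorant :: "real \<Rightarrow> nat \<Rightarrow> (real \<Rightarrow> real) \<Rightarrow> ennreal" where
  "level_majorant T n w =
     ennreal ((4/5) ^ n) + ennreal ((125/64) ^ n) * (\<Sum>j<2^n. ennreal (dyadic_increment T n j w ^ 4))"

definition sup_majorant :: "real \<Rightarrow> (real \<Rightarrow> real) \<Rightarrow> ennreal" where
  "sup_majorant T w = ennreal \<bar>w 0\<bar> + (\<Sum>n. level_majorant T n w)"

lemma abs_le_add_power4_div:
  fixes a x :: real
  assumes "a > 0"
  shows "\<bar>x\<bar> \<le> a + x ^ 4 / a ^ 3"
proof (cases "\<bar>x\<bar> \<le> a")
  case True
  then show ?thesis using assms by (simp add: add_increasing2)
next
  case False
  then have "\<bar>x\<bar> * a ^ 3 \<le> \<bar>x\<bar> * \<bar>x\<bar> ^ 3"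
    using assms by (intro mult_left_mono power_mono) auto
  also have "\<dots> = x ^ 4" by (simp add: eval_nat_numeral)
  finally have "\<bar>x\<bar> \<le> x ^ 4 / a ^ 3" using assms by (simp add: field_simps)
  then show ?thesis using assms by linarith
qed

lemma abs_dyadic_increment_le_level_majorant:
  assumes "j < 2 ^ n"
  shows "ennreal \<bar>dyadic_increment T n j w\<bar> \<le> level_majorant T n w"
proof -
  let ?d = "dyadic_increment T n j w"
  have "((4/5::real) ^ n) ^ 3 = 1 / (125/64) ^ n"
    by (simp add: power_mult[symmetric] mult.commute[of n] power_mult power_divide)
  then have "\<bar>?d\<bar> \<le> (4/5) ^ n + (125/64) ^ n * ?d ^ 4"
    using abs_le_add_power4_div[of "(4/5) ^ n" ?d] by (simp add: mult.commute)
  then have "ennreal \<bar>?d\<bar> \<le> ennreal ((4/5) ^ n) + ennreal ((125/64) ^ n) * ennreal (?d ^ 4)"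
    by (simp add: ennreal_plus[symmetric] ennreal_mult[symmetric] ennreal_leI del: ennreal_plus)
  also have "\<dots> \<le> level_majorant T n w"
    unfolding level_majorant_def using assms by (intro add_left_mono mult_left_mono member_le_sum) auto
  finally show ?thesis .
qed

lemma abs_at_dyadic_point_le:
  assumes "k \<le> 2 ^ N"
  shows "ennreal \<bar>w (dyadic_point T N k)\<bar> \<le> ennreal \<bar>w 0\<bar> + (\<Sum>n<Suc N. level_majorant T n w)"
  using assms
proof (induction N arbitrary: k)
  case 0
  then consider "k = 0" | "k = 1" by fastforce
  then show ?case
  proof cases
    case 1
    then show ?thesis by (simp add: dyadic_point_def add_increasing2)
  next
    case 2
    have "ennreal \<bar>w (dyadic_point T 0 1)\<bar> \<le> ennreal \<bar>w 0\<bar> + ennreal \<bar>dyadic_increment T 0 0 w\<bar>"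
      by (simp add: dyadic_increment_def dyadic_point_def ennreal_plus[symmetric] ennreal_leI del: ennreal_plus)
    also have "\<dots> \<le> ennreal \<bar>w 0\<bar> + level_majorant T 0 w"
      by (intro add_left_mono abs_dyadic_increment_le_level_majorant) auto
    finally show ?thesis using 2 by simp
  qed
next
  case (Suc N)
  let ?S = "\<lambda>N. ennreal \<bar>w 0\<bar> + (\<Sum>n<Suc N. level_majorant T n w)"
  have coarse: "dyadic_point T (Suc N) (2 * m) = dyadic_point T N m" for m
    by (simp add: dyadic_point_def)
  have mono: "?S N \<le> ?S (Suc N)"
    by (intro add_left_mono sum_mono2) (auto simp del: sum.lessThan_Suc)
  show ?case
  proof (cases "even k")
    case True
    then obtain m where "k = 2 * m" by auto
    with Suc.prems have "ennreal \<bar>w (dyadic_point T N m)\<bar> \<le> ?S N" by (intro Suc.IH) simp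
    from order_trans[OF this mono] show ?thesis by (simp only: \<open>k = 2 * m\<close> coarse)
  next
    case False
    then obtain m where m: "k = Suc (2 * m)" by (metis oddE Suc_eq_plus1)
    with Suc.prems have "m < 2 ^ N" by simp
    have "ennreal \<bar>w (dyadic_point T (Suc N) k)\<bar>
        \<le> ennreal \<bar>w (dyadic_point T N m)\<bar> + ennreal \<bar>dyadic_increment T (Suc N) (2 * m) w\<bar>"
      by (simp add: m dyadic_increment_def coarse ennreal_plus[symmetric] ennreal_leI del: ennreal_plus)
    also have "\<dots> \<le> ?S N + level_majorant T (Suc N) w"
      using \<open>m < 2 ^ N\<close> by (intro add_mono Suc.IH abs_dyadic_increment_le_level_majorant) auto
    also have "\<dots> = ?S (Suc N)"
      by (simp add: add.assoc)
    finally show ?thesis .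
  qed
qed

lemma abs_at_dyadic_point_le_sup_majorant:
  "k \<le> 2 ^ N \<Longrightarrow> ennreal \<bar>w (dyadic_point T N k)\<bar> \<le> sup_majorant T w"
  unfolding sup_majorant_def
  by (rule order_trans[OF abs_at_dyadic_point_le])
    (auto intro!: add_left_mono sum_le_suminf simp del: sum.lessThan_Suc)

lemma dyadic_approximation:
  assumes T: "T > 0" and s: "s \<in> {0..T}"
  obtains k where "\<And>N. k N \<le> 2 ^ N" and "(\<lambda>N. dyadic_point T N (k N)) \<longlonglongrightarrow> s"
proof -
  define k where "k N = nat \<lfloor>s * 2 ^ N / T\<rfloor>" for N
  have k: "real (k N) \<le> s * 2 ^ N / T" "s * 2 ^ N / T < real (k N) + 1" for N
    using s T by (auto simp: k_def)
  have "s * 2 ^ N / T \<le> real (2 ^ N)" for N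
    using s T by (simp add: divide_le_eq mult_right_mono)
  then have k_le: "k N \<le> 2 ^ N" for N
    unfolding k_def by (metis floor_mono floor_of_nat nat_int nat_mono)
  have lower: "s - T / 2 ^ N \<le> dyadic_point T N (k N)" for N
  proof -
    have "s - T / 2 ^ N = (s * 2 ^ N / T - 1) * (T / 2 ^ N)"
      using T by (simp add: field_simps)
    also have "\<dots> \<le> dyadic_point T N (k N)"
      unfolding dyadic_point_def times_divide_eq_right[symmetric]
      using k(2)[of N] T by (intro mult_right_mono) auto
    finally show ?thesis .
  qed
  have upper: "dyadic_point T N (k N) \<le> s" for N
  proof -
    have "dyadic_point T N (k N) \<le> (s * 2 ^ N / T) * (T / 2 ^ N)"
      unfolding dyadic_point_def times_divide_eq_right[symmetric]
      using k(1)[of N] T by (intro mult_right_mono) auto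
    also have "\<dots> = s"
      using T by simp
    finally show ?thesis .
  qed
  have "(\<lambda>N. T / 2 ^ N) \<longlonglongrightarrow> 0"
    by (rule LIMSEQ_divide_realpow_zero) auto
  then have lim_lower: "(\<lambda>N. s - T / 2 ^ N) \<longlonglongrightarrow> s"
    using tendsto_diff[OF tendsto_const[of s]] by fastforce
  have "(\<lambda>N. dyadic_point T N (k N)) \<longlonglongrightarrow> s"
    by (rule real_tendsto_sandwich[OF _ _ lim_lower tendsto_const]) (simp_all add: lower upper)
  with k_le that show thesis by blast
qed

lemma abs_le_sup_majorant:
  assumes "T > 0" and "continuous_on {0..T} w" and s: "s \<in> {0..T}"
  shows "ennreal \<bar>w s\<bar> \<le> sup_majorant T w"
proof -
  obtain k where k: "\<And>N. k N \<le> 2 ^ N" and lim: "(\<lambda>N. dyadic_point T N (k N)) \<longlonglongrightarrow> s"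
    using dyadic_approximation[OF assms(1) s] by blast
  have "dyadic_point T N (k N) \<in> {0..T}" for N
    using k[of N] assms(1) by (simp add: dyadic_point_def field_simps)
  then have "(\<lambda>N. w (dyadic_point T N (k N))) \<longlonglongrightarrow> w s"
    using continuous_on_tendsto_compose[OF assms(2) lim s] by simp
  then have "(\<lambda>N. ennreal \<bar>w (dyadic_point T N (k N))\<bar>) \<longlonglongrightarrow> ennreal \<bar>w s\<bar>"
    by (intro tendsto_ennrealI tendsto_rabs)
  then show ?thesis
    by (rule LIMSEQ_le_const2) (use abs_at_dyadic_point_le_sup_majorant[OF k] in blast)
qed

lemma dyadic_increment_measurable [measurable]:
  "dyadic_increment T n j \<in> borel_measurable (PiM UNIV (\<lambda>_::real. borel))"
  unfolding dyadic_increment_def by measurable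

lemma level_majorant_measurable [measurable]:
  "level_majorant T n \<in> borel_measurable (PiM UNIV (\<lambda>_::real. borel))"
  unfolding level_majorant_def by measurable

lemma sup_majorant_measurable [measurable]:
  "sup_majorant T \<in> borel_measurable (PiM UNIV (\<lambda>_::real. borel))"
  unfolding sup_majorant_def by measurable

lemma nn_integral_normal_power4:
  assumes X: "distributed M lborel X (\<lambda>x. ennreal (normal_density 0 \<sigma> x))" and "\<sigma> > 0"
  shows "(\<integral>\<^sup>+\<omega>. ennreal (X \<omega> ^ 4) \<partial>M) = ennreal (3 * \<sigma> ^ 4)"
proof -
  have "(\<integral>\<^sup>+\<omega>. ennreal (X \<omega> ^ 4) \<partial>M)
      = (\<integral>\<^sup>+x. ennreal (normal_density 0 \<sigma> x * (x - 0) ^ (2 * 2)) \<partial>lborel)"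
    by (subst distributed_nn_integral[OF X, symmetric]) (auto simp: ennreal_mult')
  also have "\<dots> = ennreal (\<integral>x. normal_density 0 \<sigma> x * (x - 0) ^ (2 * 2) \<partial>lborel)"
    using integrable_normal_moment[OF \<open>\<sigma> > 0\<close>, of 0 "2 * 2"]
    by (intro nn_integral_eq_integral) (auto simp: zero_le_mult_iff)
  also have "\<dots> = ennreal (fact (2 * 2) / ((2 / \<sigma>\<^sup>2) ^ 2 * fact 2))"
    using integral_normal_moment_even[OF \<open>\<sigma> > 0\<close>, of 0 2] by simp
  also have "fact (2 * 2) / ((2 / \<sigma>\<^sup>2) ^ 2 * fact 2) = 3 * \<sigma> ^ 4"
    using \<open>\<sigma> > 0\<close> by (simp add: fact_numeral power2_eq_square power4_eq_xxxx field_simps)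
  finally show ?thesis .
qed

lemma dyadic_increment_distributed:
  assumes "brownian_law W" and T: "T > 0"
  shows "distributed W lborel (dyadic_increment T n j)
           (\<lambda>x. ennreal (normal_density 0 (sqrt (T / 2 ^ n)) x))"
proof -
  define t where "t i = dyadic_point T n (j + i)" for i
  have "0 \<le> t 0 \<and> (\<forall>i<1. t i < t (Suc i))"
    using T by (simp add: t_def dyadic_point_def field_simps)
  with assms(1) have "distributed W lborel (\<lambda>w. w (t (Suc 0)) - w (t 0))
      (\<lambda>x. ennreal (normal_density 0 (sqrt (t (Suc 0) - t 0)) x))"
    unfolding brownian_law_def by blast
  moreover have "t (Suc 0) - t 0 = T / 2 ^ n"
    by (simp add: t_def dyadic_point_def field_simps)
  ultimately show ?thesis
    by (simp add: t_def dyadic_increment_def[abs_def])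
qed

lemma nn_integral_level_majorant:
  assumes BL: "brownian_law W" and T: "T > 0"
  shows "(\<integral>\<^sup>+w. level_majorant T n w \<partial>W) = ennreal ((4/5) ^ n + 3 * T\<^sup>2 * (125/128) ^ n)"
proof -
  interpret W: prob_space W using BL by (simp add: brownian_law_def)
  have sets_W: "sets W = sets (PiM UNIV (\<lambda>_::real. borel))"
    using BL by (simp add: brownian_law_def)
  have [measurable]: "dyadic_increment T n j \<in> borel_measurable W" for j
    by (simp add: measurable_cong_sets[OF sets_W refl])
  have moment: "(\<integral>\<^sup>+w. ennreal (dyadic_increment T n j w ^ 4) \<partial>W) = ennreal (3 * (T / 2 ^ n)\<^sup>2)" for j
  proof -
    have "sqrt (T / 2 ^ n) ^ 4 = (sqrt (T / 2 ^ n) ^ 2)\<^sup>2"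
      by (simp flip: power_mult)
    also have "\<dots> = (T / 2 ^ n)\<^sup>2"
      using T by simp
    finally show ?thesis
      using nn_integral_normal_power4[OF dyadic_increment_distributed[OF BL T]] T by simp
  qed
  have "(\<integral>\<^sup>+w. level_majorant T n w \<partial>W)
      = ennreal ((4/5) ^ n) + ennreal ((125/64) ^ n) * (\<Sum>j<(2::nat)^n. ennreal (3 * (T / 2 ^ n)\<^sup>2))"
    unfolding level_majorant_def
    by (simp add: nn_integral_add nn_integral_cmult nn_integral_sum moment W.emeasure_space_1
        del: sum_ennreal)
  also have "\<dots> = ennreal ((4/5) ^ n + (125/64) ^ n * (2 ^ n * (3 * (T / 2 ^ n)\<^sup>2)))"
    by (simp add: ennreal_of_nat_eq_real_of_nat ennreal_mult[symmetric] ennreal_plus[symmetric]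
        del: ennreal_plus)
  also have "(125/64) ^ n * (2 ^ n * (3 * (T / 2 ^ n)\<^sup>2)) = 3 * T\<^sup>2 * (125/128 :: real) ^ n"
  proof -
    have "(125/128 :: real) ^ n = (125/64) ^ n / 2 ^ n"
      by (simp flip: power_divide)
    then show ?thesis
      by (simp add: power2_eq_square)
  qed
  finally show ?thesis .
qed

lemma nn_integral_sup_majorant_finite:
  assumes BL: "brownian_law W" and T: "T > 0"
  shows "(\<integral>\<^sup>+w. sup_majorant T w \<partial>W) < \<infinity>"
proof -
  have sets_W: "sets W = sets (PiM UNIV (\<lambda>_::real. borel))"
    using BL by (simp add: brownian_law_def)
  have [measurable]: "level_majorant T n \<in> borel_measurable W" "(\<lambda>w. w 0) \<in> borel_measurable W" for n
    by (simp_all add: measurable_cong_sets[OF sets_W refl])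
  define a where "a n = (4/5) ^ n + 3 * T\<^sup>2 * (125/128 :: real) ^ n" for n
  have "summable a"
    unfolding a_def by (intro summable_add summable_mult summable_geometric) auto
  moreover have "a n \<ge> 0" for n
    by (simp add: a_def)
  ultimately have sum_finite: "(\<Sum>n. ennreal (a n)) \<noteq> \<top>"
    by (rule ennreal_suminf_neq_top)
  have "(\<integral>\<^sup>+w. sup_majorant T w \<partial>W)
      = (\<integral>\<^sup>+w. ennreal \<bar>w 0\<bar> \<partial>W) + (\<Sum>n. \<integral>\<^sup>+w. level_majorant T n w \<partial>W)"
    unfolding sup_majorant_def by (simp add: nn_integral_add nn_integral_suminf)
  also have "(\<integral>\<^sup>+w. ennreal \<bar>w 0\<bar> \<partial>W) = 0"
    using BL by (simp add: brownian_law_def nn_integral_0_iff_AE)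
  also have "(\<Sum>n. \<integral>\<^sup>+w. level_majorant T n w \<partial>W) = (\<Sum>n. ennreal (a n))"
    by (simp add: nn_integral_level_majorant[OF BL T] a_def)
  finally show ?thesis
    using sum_finite by (simp add: less_top)
qed

section \<open>Poisson point processes\<close>

text \<open>Only the counts card (\<Phi> \<omega> \<inter> A) are known to be measurable, so an event is phrased through
  them; it agrees with \<Phi> \<omega> \<inter> A \<noteq> {} whenever the count is finite (card of an infinite set is 0).\<close>

definition hit_event :: "'w measure \<Rightarrow> ('w \<Rightarrow> 's set) \<Rightarrow> 's set \<Rightarrow> 'w set" where
  "hit_event M \<Phi> A = {\<omega> \<in> space M. card (\<Phi> \<omega> \<inter> A) \<noteq> 0}"

context
  fixes M :: "'w measure" and S \<mu> :: "'s measure" and \<Phi> :: "'w \<Rightarrow> 's set"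
  assumes ppp: "poisson_point_process M S \<mu> \<Phi>"
begin

interpretation prob_space M
  using ppp by (simp add: poisson_point_process_def)

lemma poisson_point_process_count:
  assumes "A \<in> sets S" and "emeasure \<mu> A < \<infinity>"
  shows "AE \<omega> in M. finite (\<Phi> \<omega> \<inter> A)"
    and "(\<lambda>\<omega>. card (\<Phi> \<omega> \<inter> A)) \<in> measurable M (count_space UNIV)"
    and "measure M {\<omega>\<in>space M. card (\<Phi> \<omega> \<inter> A) = 0} = exp (- measure \<mu> A)"
  using ppp assms unfolding poisson_point_process_def by (auto dest!: bspec[of _ _ A])

lemma hit_event_sets:
  assumes "A \<in> sets S" and "emeasure \<mu> A < \<infinity>"
  shows "hit_event M \<Phi> A \<in> sets M"
proof -
  have eq: "hit_event M \<Phi> A = (\<lambda>\<omega>. card (\<Phi> \<omega> \<inter> A)) -` {k. k \<noteq> 0} \<inter> space M"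
    by (auto simp: hit_event_def)
  show ?thesis
    unfolding eq by (rule measurable_sets[OF poisson_point_process_count(2)[OF assms]]) simp
qed

lemma prob_hit_event:
  assumes "A \<in> sets S" and "emeasure \<mu> A < \<infinity>"
  shows "prob (hit_event M \<Phi> A) = 1 - exp (- measure \<mu> A)"
proof -
  have "hit_event M \<Phi> A = space M - {\<omega>\<in>space M. card (\<Phi> \<omega> \<inter> A) = 0}"
    by (auto simp: hit_event_def)
  moreover have "{\<omega>\<in>space M. card (\<Phi> \<omega> \<inter> A) = 0} \<in> sets M"
    using measurable_sets[OF poisson_point_process_count(2)[OF assms], of "{0}"]
    by (simp add: vimage_def Int_def conj_commute)
  ultimately show ?thesis
    using prob_compl poisson_point_process_count(3)[OF assms] by simp
qed

lemma prob_hit_event_le: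
  assumes "A \<in> sets S" and "emeasure \<mu> A < \<infinity>"
  shows "prob (hit_event M \<Phi> A) \<le> measure \<mu> A"
  using prob_hit_event[OF assms] exp_ge_add_one_self[of "- measure \<mu> A"] by simp

lemma AE_empty_if_not_hit:
  assumes "A \<in> sets S" and "emeasure \<mu> A < \<infinity>"
  shows "AE \<omega> in M. \<omega> \<notin> hit_event M \<Phi> A \<longrightarrow> \<Phi> \<omega> \<inter> A = {}"
  using poisson_point_process_count(1)[OF assms] AE_space
  by eventually_elim (auto simp: hit_event_def)

lemma prob_Inter_hit_event_le:
  fixes A :: "nat \<Rightarrow> 's set"
  assumes "finite I" "I \<noteq> {}" "A ` I \<subseteq> sets S" "disjoint_family_on A I"
    and "\<And>i. i \<in> I \<Longrightarrow> emeasure \<mu> (A i) < \<infinity>" "\<And>i. i \<in> I \<Longrightarrow> measure \<mu> (A i) \<le> c"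
  shows "prob (\<Inter>i\<in>I. hit_event M \<Phi> (A i)) \<le> (1 - exp (- c)) ^ card I"
proof -
  have indep: "indep_vars (\<lambda>_. count_space UNIV) (\<lambda>i \<omega>. card (\<Phi> \<omega> \<inter> A i)) I"
    using ppp assms(1,3,4,5) unfolding poisson_point_process_def by blast
  have eq: "hit_event M \<Phi> (A i) = (\<lambda>\<omega>. card (\<Phi> \<omega> \<inter> A i)) -` {k. k \<noteq> 0} \<inter> space M" for i
    by (auto simp: hit_event_def)
  have "prob (\<Inter>i\<in>I. hit_event M \<Phi> (A i)) = (\<Prod>i\<in>I. prob (hit_event M \<Phi> (A i)))"
    unfolding eq by (rule indep_varsD[OF indep assms(2,1) order_refl]) simp
  also have "\<dots> \<le> (\<Prod>i\<in>I. 1 - exp (- c))"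
    using assms(3,5,6) by (intro prod_mono) (auto simp: prob_hit_event)
  finally show ?thesis by simp
qed

end

section \<open>Particles able to reach a point\<close>

abbreviation particles :: "(real \<times> (real \<Rightarrow> real)) measure" where
  "particles \<equiv> borel \<Otimes>\<^sub>M PiM UNIV (\<lambda>_::real. borel)"

abbreviation particle_intensity :: "real \<Rightarrow> (real \<Rightarrow> real) measure \<Rightarrow> (real \<times> (real \<Rightarrow> real)) measure" where
  "particle_intensity lam W \<equiv> density (lborel \<Otimes>\<^sub>M W) (\<lambda>_. ennreal lam)"

definition near_reach :: "real \<Rightarrow> real \<Rightarrow> real \<Rightarrow> (real \<times> (real \<Rightarrow> real)) set" where
  "near_reach T R y = {(x, w). ennreal \<bar>y - x\<bar> \<le> sup_majorant T w \<and> \<bar>y - x\<bar> \<le> R}"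

definition far_reach :: "real \<Rightarrow> real \<Rightarrow> real \<Rightarrow> (real \<times> (real \<Rightarrow> real)) set" where
  "far_reach T R y = {(x, w). ennreal \<bar>y - x\<bar> \<le> sup_majorant T w \<and> R < \<bar>y - x\<bar>}"

lemma near_reach_sets: "near_reach T R y \<in> sets particles"
proof -
  have "near_reach T R y =
      {p \<in> space particles. ennreal \<bar>y - fst p\<bar> \<le> sup_majorant T (snd p) \<and> \<bar>y - fst p\<bar> \<le> R}"
    by (auto simp: near_reach_def space_pair_measure space_PiM)
  also have "\<dots> \<in> sets particles"
    by measurable
  finally show ?thesis .
qed

lemma far_reach_sets: "far_reach T R y \<in> sets particles"
proof -
  have "far_reach T R y =
      {p \<in> space particles. ennreal \<bar>y - fst p\<bar> \<le> sup_majorant T (snd p) \<and> R < \<bar>y - fst p\<bar>}"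
    by (auto simp: far_reach_def space_pair_measure space_PiM)
  also have "\<dots> \<in> sets particles"
    by measurable
  finally show ?thesis .
qed

lemma not_in_occupied_if_unreached:
  assumes "0 \<le> t" and "t < T"
    and cont: "\<forall>(x, w)\<in>P. continuous_on {0..} w"
    and "P \<inter> near_reach T R y = {}" and "P \<inter> far_reach T R y = {}"
  shows "y \<notin> occupied P t"
proof
  assume "y \<in> occupied P t"
  then obtain x w s where xw: "(x, w) \<in> P" and s: "s \<in> {0..t}" and y: "y = x + w s"
    unfolding occupied_def by auto
  have "continuous_on {0..T} w"
    using cont xw by (auto intro: continuous_on_subset)
  then have "ennreal \<bar>y - x\<bar> \<le> sup_majorant T w"
    using abs_le_sup_majorant[of T w s] s assms(1,2) y by auto
  then have "(x, w) \<in> near_reach T R y \<union> far_reach T R y"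
    by (auto simp: near_reach_def far_reach_def)
  with xw assms(4,5) show False
    by auto
qed

lemma emeasure_lborel_pair_le:
  assumes "sigma_finite_measure W" and A: "A \<in> sets (lborel \<Otimes>\<^sub>M W)"
    and slice: "\<And>w. emeasure lborel ((\<lambda>x. (x, w)) -` A) \<le> g w"
  shows "emeasure (lborel \<Otimes>\<^sub>M W) A \<le> (\<integral>\<^sup>+w. g w \<partial>W)"
proof -
  interpret pair_sigma_finite lborel W
    using assms(1) by (simp add: pair_sigma_finite_def lborel.sigma_finite_measure_axioms)
  show ?thesis
    using A slice by (simp add: emeasure_pair_measure_alt2 nn_integral_mono)
qed

lemma emeasure_near_slice_le: "emeasure lborel {x. ennreal \<bar>y - x\<bar> \<le> r \<and> \<bar>y - x\<bar> \<le> R} \<le> 2 * r"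
proof (cases r)
  case (real c)
  then have "{x. ennreal \<bar>y - x\<bar> \<le> r \<and> \<bar>y - x\<bar> \<le> R} \<subseteq> {y - c .. y + c}"
    by (auto simp: ennreal_le_iff abs_le_iff)
  then have "emeasure lborel {x. ennreal \<bar>y - x\<bar> \<le> r \<and> \<bar>y - x\<bar> \<le> R} \<le> ennreal (2 * c)"
    using emeasure_mono[of _ "{y - c .. y + c}" lborel] real by simp
  then show ?thesis
    using real by (simp add: ennreal_mult)
qed simp

lemma emeasure_far_slice_le:
  assumes "R \<ge> 0"
  shows "emeasure lborel {x. ennreal \<bar>y - x\<bar> \<le> r \<and> R < \<bar>y - x\<bar>} \<le> 2 * (r - ennreal R)"
proof (cases r)
  case (real c)
  then have "{x. ennreal \<bar>y - x\<bar> \<le> r \<and> R < \<bar>y - x\<bar>} \<subseteq> {y - c .. y - R} \<union> {y + R .. y + c}"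
    by (auto simp: ennreal_le_iff abs_le_iff)
  then have "emeasure lborel {x. ennreal \<bar>y - x\<bar> \<le> r \<and> R < \<bar>y - x\<bar>}
      \<le> emeasure lborel {y - c .. y - R} + emeasure lborel {y + R .. y + c}"
    by (intro order_trans[OF emeasure_mono emeasure_subadditive]) auto
  also have "\<dots> = 2 * (r - ennreal R)"
    using real assms by (auto simp: emeasure_lborel_Icc_eq ennreal_minus mult_2 ennreal_minus_if)
  finally show ?thesis .
qed simp

lemma sets_lborel_pair_brownian:
  "brownian_law W \<Longrightarrow> sets (lborel \<Otimes>\<^sub>M W) = sets particles"
  by (intro sets_pair_measure_cong) (simp_all add: brownian_law_def)

lemma emeasure_near_reach_le:
  assumes "brownian_law W"
  shows "emeasure (particle_intensity lam W) (near_reach T R y)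
           \<le> ennreal lam * (\<integral>\<^sup>+w. 2 * sup_majorant T w \<partial>W)"
proof -
  have W: "prob_space W" "sets W = sets (PiM UNIV (\<lambda>_::real. borel))"
    using assms by (simp_all add: brownian_law_def)
  have A: "near_reach T R y \<in> sets (lborel \<Otimes>\<^sub>M W)"
    using near_reach_sets sets_lborel_pair_brownian[OF assms] by simp
  have "emeasure (lborel \<Otimes>\<^sub>M W) (near_reach T R y) \<le> (\<integral>\<^sup>+w. 2 * sup_majorant T w \<partial>W)"
    using W A emeasure_near_slice_le
    by (intro emeasure_lborel_pair_le) (auto simp: near_reach_def prob_space_imp_sigma_finite)
  then show ?thesis
    using A by (simp add: emeasure_density_const mult_left_mono)
qed

lemma emeasure_far_reach_le:
  assumes "brownian_law W" and "R \<ge> 0"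
  shows "emeasure (particle_intensity lam W) (far_reach T R y)
           \<le> ennreal lam * (\<integral>\<^sup>+w. 2 * (sup_majorant T w - ennreal R) \<partial>W)"
proof -
  have W: "prob_space W" "sets W = sets (PiM UNIV (\<lambda>_::real. borel))"
    using assms by (simp_all add: brownian_law_def)
  have A: "far_reach T R y \<in> sets (lborel \<Otimes>\<^sub>M W)"
    using far_reach_sets sets_lborel_pair_brownian[OF assms(1)] by simp
  have "emeasure (lborel \<Otimes>\<^sub>M W) (far_reach T R y) \<le> (\<integral>\<^sup>+w. 2 * (sup_majorant T w - ennreal R) \<partial>W)"
    using W A emeasure_far_slice_le[OF assms(2)]
    by (intro emeasure_lborel_pair_le) (auto simp: far_reach_def prob_space_imp_sigma_finite)
  then show ?thesis
    using A by (simp add: emeasure_density_const mult_left_mono)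
qed

lemma nn_integral_minus_const_small:
  fixes f :: "'a \<Rightarrow> ennreal"
  assumes [measurable]: "f \<in> borel_measurable M" and fin: "(\<integral>\<^sup>+x. f x \<partial>M) < \<infinity>" and "e > 0"
  obtains R :: nat where "(\<integral>\<^sup>+x. f x - ennreal (real R) \<partial>M) < e"
proof -
  have "AE x in M. f x \<noteq> \<top>"
    using nn_integral_PInf_AE[of f M] fin by auto
  then have "AE x in M. (INF R. f x - ennreal (real R)) = 0"
  proof eventually_elim
    case (elim x)
    then obtain c where "f x = ennreal c"
      by (cases "f x") auto
    moreover have "ennreal c \<le> ennreal (real (nat \<lceil>c\<rceil>))"
      by (intro ennreal_leI real_nat_ceiling_ge)
    ultimately have "f x - ennreal (real (nat \<lceil>c\<rceil>)) = 0"
      by (simp add: diff_eq_0_iff_ennreal)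
    then show ?case
      by (metis INF_lower2 UNIV_I le_zero_eq order_refl)
  qed
  then have "(\<integral>\<^sup>+x. (INF R. f x - ennreal (real R)) \<partial>M) = (\<integral>\<^sup>+x. 0 \<partial>M)"
    by (rule nn_integral_cong_AE)
  moreover have "(\<integral>\<^sup>+x. (INF R. f x - ennreal (real R)) \<partial>M) = (INF R. \<integral>\<^sup>+x. f x - ennreal (real R) \<partial>M)"
  proof (rule nn_integral_monotone_convergence_INF_AE[where i = 0])
    show "AE x in M. f x - ennreal (real (Suc R)) \<le> f x - ennreal (real R)" for R
      by (intro AE_I2 ennreal_minus_mono) simp_all
    show "(\<lambda>x. f x - ennreal (real R)) \<in> borel_measurable M" for R
      by measurable
    show "(\<integral>\<^sup>+x. f x - ennreal (real 0) \<partial>M) < \<infinity>"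
      using fin by simp
  qed
  ultimately have "(INF R. \<integral>\<^sup>+x. f x - ennreal (real R) \<partial>M) < e"
    using \<open>e > 0\<close> by simp
  then show thesis
    using that by (auto simp: INF_less_iff)
qed

lemma measure_le_if_emeasure_le_ennreal:
  assumes "emeasure N A \<le> ennreal c" and "c \<ge> 0"
  shows "emeasure N A < \<infinity>" and "measure N A \<le> c"
  using assms by (simp_all add: measure_def enn2real_leI le_less_trans[OF _ ennreal_less_top])

lemma near_reach_intensity_bounded:
  assumes BL: "brownian_law W" and "T > 0"
  obtains c where "c \<ge> 0"
    and "\<And>R y. emeasure (particle_intensity lam W) (near_reach T R y) < \<infinity>"
    and "\<And>R y. measure (particle_intensity lam W) (near_reach T R y) \<le> c"
proof -
  have sets_W: "sets W = sets (PiM UNIV (\<lambda>_::real. borel))"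
    using BL by (simp add: brownian_law_def)
  have [measurable]: "sup_majorant T \<in> borel_measurable W"
    by (simp add: measurable_cong_sets[OF sets_W refl])
  define C where "C = ennreal lam * (\<integral>\<^sup>+w. 2 * sup_majorant T w \<partial>W)"
  have "C \<noteq> \<top>"
    using nn_integral_sup_majorant_finite[OF assms]
    by (simp add: C_def nn_integral_cmult ennreal_mult_eq_top_iff)
  then have "C = ennreal (enn2real C)"
    by (cases C) auto
  then have le: "emeasure (particle_intensity lam W) (near_reach T R y)
      \<le> ennreal (enn2real C)" for R y
    using emeasure_near_reach_le[OF BL] by (simp add: C_def)
  show thesis
  proof (rule that)
    show "emeasure (particle_intensity lam W) (near_reach T R y) < \<infinity>" for R y
      by (rule measure_le_if_emeasure_le_ennreal(1)[OF le]) simp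
    show "measure (particle_intensity lam W) (near_reach T R y) \<le> enn2real C" for R y
      by (rule measure_le_if_emeasure_le_ennreal(2)[OF le]) simp
  qed simp
qed

lemma far_reach_intensity_small:
  assumes BL: "brownian_law W" and "T > 0" and "lam > 0" and "\<eta> > 0"
  obtains R where "R \<ge> 0"
    and "\<And>y. emeasure (particle_intensity lam W) (far_reach T R y) < \<infinity>"
    and "\<And>y. measure (particle_intensity lam W) (far_reach T R y) \<le> \<eta>"
proof -
  have sets_W: "sets W = sets (PiM UNIV (\<lambda>_::real. borel))"
    using BL by (simp add: brownian_law_def)
  have meas: "sup_majorant T \<in> borel_measurable W"
    by (simp add: measurable_cong_sets[OF sets_W refl])
  have "ennreal (\<eta> / (2 * lam)) > 0"
    using assms(3,4) by simp
  then obtain R :: nat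
    where R: "(\<integral>\<^sup>+w. sup_majorant T w - ennreal (real R) \<partial>W) < ennreal (\<eta> / (2 * lam))"
    by (rule nn_integral_minus_const_small[OF meas nn_integral_sup_majorant_finite[OF BL \<open>T > 0\<close>]])
  have "ennreal lam * (\<integral>\<^sup>+w. 2 * (sup_majorant T w - ennreal (real R)) \<partial>W)
      = ennreal (2 * lam) * (\<integral>\<^sup>+w. sup_majorant T w - ennreal (real R) \<partial>W)"
    using assms(3) meas by (simp add: nn_integral_cmult ennreal_mult ac_simps)
  also have "\<dots> \<le> ennreal (2 * lam) * ennreal (\<eta> / (2 * lam))"
    using R by (intro mult_left_mono) auto
  also have "\<dots> = ennreal \<eta>"
    using assms(3,4) by (simp flip: ennreal_mult)
  finally have bound: "ennreal lam * (\<integral>\<^sup>+w. 2 * (sup_majorant T w - ennreal (real R)) \<partial>W) \<le> ennreal \<eta>" .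
  have le: "emeasure (particle_intensity lam W) (far_reach T (real R) y) \<le> ennreal \<eta>" for y
    by (rule order_trans[OF emeasure_far_reach_le[OF BL] bound]) simp
  show thesis
  proof (rule that[of "real R"])
    show "emeasure (particle_intensity lam W) (far_reach T (real R) y) < \<infinity>" for y
      by (rule measure_le_if_emeasure_le_ennreal(1)[OF le]) (use \<open>\<eta> > 0\<close> in simp)
    show "measure (particle_intensity lam W) (far_reach T (real R) y) \<le> \<eta>" for y
      by (rule measure_le_if_emeasure_le_ennreal(2)[OF le]) (use \<open>\<eta> > 0\<close> in simp)
  qed simp
qed

section \<open>Uncovered points far away\<close>

lemma disjoint_near_reach:
  assumes "2 * R < \<bar>y - y'\<bar>"
  shows "near_reach T R y \<inter> near_reach T R y' = {}"
proof -
  have False if "\<bar>y - x\<bar> \<le> R" and "\<bar>y' - x\<bar> \<le> R" for x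
    using that assms by linarith
  then show ?thesis
    by (auto simp: near_reach_def)
qed

lemma spaced_near_reach_disjoint:
  assumes "\<bar>\<sigma>\<bar> = 1" and "R \<ge> 0"
  shows "disjoint_family_on (\<lambda>k. near_reach T R (\<sigma> * (a + (2 * R + 1) * real k))) I"
  unfolding disjoint_family_on_def
proof (intro ballI impI disjoint_near_reach)
  fix i j :: nat
  assume "i \<noteq> j"
  then have "1 \<le> \<bar>real i - real j\<bar>"
    by linarith
  then have "2 * R + 1 \<le> (2 * R + 1) * \<bar>real i - real j\<bar>"
    using assms(2) by (simp add: mult_le_cancel_left1)
  also have "\<dots> = \<bar>\<sigma> * ((2 * R + 1) * (real i - real j))\<bar>"
    using assms by (simp add: abs_mult)
  also have "\<dots> = \<bar>\<sigma> * (a + (2 * R + 1) * real i) - \<sigma> * (a + (2 * R + 1) * real j)\<bar>"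
    by (simp add: algebra_simps)
  finally show "2 * R < \<bar>\<sigma> * (a + (2 * R + 1) * real i) - \<sigma> * (a + (2 * R + 1) * real j)\<bar>"
    by linarith
qed

lemma (in prob_space) AE_if_small_exceptional_sets:
  assumes "\<And>e. e > 0 \<Longrightarrow> \<exists>B\<in>sets M. prob B \<le> e \<and> (AE \<omega> in M. \<omega> \<notin> B \<longrightarrow> Q \<omega>)"
  shows "AE \<omega> in M. Q \<omega>"
proof -
  have "\<forall>m. \<exists>B\<in>sets M. prob B \<le> inverse (real (Suc m)) \<and> (AE \<omega> in M. \<omega> \<notin> B \<longrightarrow> Q \<omega>)"
    using assms by simp
  then obtain B where B: "\<And>m. B m \<in> sets M" "\<And>m. prob (B m) \<le> inverse (real (Suc m))"
      "\<And>m. AE \<omega> in M. \<omega> \<notin> B m \<longrightarrow> Q \<omega>"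
    by metis
  have "prob (\<Inter>m. B m) \<le> inverse (real (Suc m))" for m
    using B(1,2)[of m] by (meson INT_lower UNIV_I finite_measure_mono order_trans)
  then have "prob (\<Inter>m. B m) \<le> 0"
    by (intro LIMSEQ_le_const[OF LIMSEQ_inverse_real_of_nat]) auto
  then have "(\<Inter>m. B m) \<in> null_sets M"
    using B(1) by (simp add: measure_le_0_iff emeasure_eq_measure null_sets_def sets.countable_INT)
  then have "AE \<omega> in M. \<omega> \<notin> (\<Inter>m. B m)"
    by (rule AE_not_in)
  moreover have "AE \<omega> in M. \<forall>m. \<omega> \<notin> B m \<longrightarrow> Q \<omega>"
    unfolding AE_all_countable using B(3) by blast
  ultimately show ?thesis
    by eventually_elim auto
qed

lemma not_has_unbounded_cluster:
  assumes above: "\<And>b. \<exists>y. b \<le> y \<and> y \<notin> A" and below: "\<And>b. \<exists>y. y \<le> b \<and> y \<notin> A"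
  shows "\<not> has_unbounded_cluster A"
proof
  assume "has_unbounded_cluster A"
  then obtain z where "z \<in> A" and unbounded: "\<not> bounded (path_component_set A z)"
    unfolding has_unbounded_cluster_def by blast
  obtain a b where a: "a \<le> z" "a \<notin> A" and b: "z \<le> b" "b \<notin> A"
    using above below by blast
  let ?C = "path_component_set A z"
  have "connected ?C"
    by (simp add: path_connected_path_component path_connected_imp_connected)
  then have interval: "w \<in> ?C" if "x \<in> ?C" "y \<in> ?C" "x \<le> w" "w \<le> y" for x y w
    using that unfolding connected_iff_interval by blast
  have "z \<in> ?C"
    using \<open>z \<in> A\<close> by (simp add: path_component_refl)
  moreover have "a \<notin> ?C" "b \<notin> ?C"
    using a b path_component_subset by blast+
  ultimately have "?C \<subseteq> {a..b}"
    using interval[of _ z a] interval[of z _ b] a(1) b(1) by fastforce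
  with unbounded show False
    using bounded_closed_interval bounded_subset by blast
qed

context
  fixes lam :: real and M :: "'w measure" and W :: "(real \<Rightarrow> real) measure"
    and \<Phi> :: "'w \<Rightarrow> (real \<times> (real \<Rightarrow> real)) set" and t :: real
  assumes lam: "lam > 0" and BL: "brownian_law W"
    and ppp: "poisson_point_process M particles (particle_intensity lam W) \<Phi>"
    and cont: "AE \<omega> in M. \<forall>(x, w)\<in>\<Phi> \<omega>. continuous_on {0..} w"
    and t: "t \<ge> 0"
begin

interpretation prob_space M
  using ppp by (simp add: poisson_point_process_def)

lemma AE_not_occupied_if_not_hit:
  assumes "t < T"
    and "emeasure (particle_intensity lam W) (near_reach T R y) < \<infinity>"
    and "emeasure (particle_intensity lam W) (far_reach T R y) < \<infinity>"
  shows "AE \<omega> in M. \<omega> \<notin> hit_event M \<Phi> (near_reach T R y) \<and> \<omega> \<notin> hit_event M \<Phi> (far_reach T R y)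
           \<longrightarrow> y \<notin> occupied (\<Phi> \<omega>) t"
  using AE_empty_if_not_hit[OF ppp near_reach_sets assms(2)] AE_empty_if_not_hit[OF ppp far_reach_sets assms(3)]
    cont
proof eventually_elim
  case (elim \<omega>)
  show ?case
  proof
    assume "\<omega> \<notin> hit_event M \<Phi> (near_reach T R y) \<and> \<omega> \<notin> hit_event M \<Phi> (far_reach T R y)"
    with elim have "\<Phi> \<omega> \<inter> near_reach T R y = {}" "\<Phi> \<omega> \<inter> far_reach T R y = {}"
      by simp_all
    with elim(3) show "y \<notin> occupied (\<Phi> \<omega>) t"
      by (rule not_in_occupied_if_unreached[OF t assms(1)])
  qed
qed

lemma prob_spaced_points_hit_le:
  fixes n :: nat and a \<sigma> R :: real
  assumes \<sigma>: "\<bar>\<sigma>\<bar> = 1" and "R \<ge> 0" and "n > 0"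
    and near_fin: "\<And>y. emeasure (particle_intensity lam W) (near_reach T R y) < \<infinity>"
    and near_le: "\<And>y. measure (particle_intensity lam W) (near_reach T R y) \<le> c"
    and far_fin: "\<And>y. emeasure (particle_intensity lam W) (far_reach T R y) < \<infinity>"
    and far_le: "\<And>y. measure (particle_intensity lam W) (far_reach T R y) \<le> \<eta>"
  defines "y \<equiv> \<lambda>k. \<sigma> * (a + (2 * R + 1) * real k)"
  shows "(\<Inter>k<n. hit_event M \<Phi> (near_reach T R (y k))) \<union> (\<Union>k<n. hit_event M \<Phi> (far_reach T R (y k)))
           \<in> sets M"
    and "prob ((\<Inter>k<n. hit_event M \<Phi> (near_reach T R (y k))) \<union> (\<Union>k<n. hit_event M \<Phi> (far_reach T R (y k))))
           \<le> (1 - exp (- c)) ^ n + real n * \<eta>"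
proof -
  define hit_near where "hit_near = (\<Inter>k<n. hit_event M \<Phi> (near_reach T R (y k)))"
  define hit_far where "hit_far = (\<Union>k<n. hit_event M \<Phi> (far_reach T R (y k)))"
  have events: "hit_near \<in> sets M" "hit_far \<in> sets M"
    using hit_event_sets[OF ppp] near_reach_sets far_reach_sets near_fin far_fin \<open>n > 0\<close>
    by (auto simp: hit_near_def hit_far_def)
  then show "(\<Inter>k<n. hit_event M \<Phi> (near_reach T R (y k))) \<union> (\<Union>k<n. hit_event M \<Phi> (far_reach T R (y k)))
      \<in> sets M"
    by (simp add: hit_near_def hit_far_def)
  have "disjoint_family_on (\<lambda>k. near_reach T R (y k)) {..<n}"
    unfolding y_def by (rule spaced_near_reach_disjoint[OF \<sigma> \<open>R \<ge> 0\<close>])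
  then have "prob hit_near \<le> (1 - exp (- c)) ^ card {..<n}"
    unfolding hit_near_def using near_reach_sets near_fin near_le \<open>n > 0\<close>
    by (intro prob_Inter_hit_event_le[OF ppp]) auto
  moreover have "prob hit_far \<le> (\<Sum>k<n. prob (hit_event M \<Phi> (far_reach T R (y k))))"
    unfolding hit_far_def using hit_event_sets[OF ppp far_reach_sets far_fin]
    by (intro finite_measure_subadditive_finite) auto
  moreover have "prob (hit_event M \<Phi> (far_reach T R (y k))) \<le> \<eta>" for k
    using prob_hit_event_le[OF ppp far_reach_sets far_fin] far_le by (rule order_trans)
  then have "(\<Sum>k<n. prob (hit_event M \<Phi> (far_reach T R (y k)))) \<le> real n * \<eta>"
    using sum_mono[of "{..<n}" _ "\<lambda>_. \<eta>"] by simp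
  ultimately show "prob ((\<Inter>k<n. hit_event M \<Phi> (near_reach T R (y k))) \<union>
      (\<Union>k<n. hit_event M \<Phi> (far_reach T R (y k)))) \<le> (1 - exp (- c)) ^ n + real n * \<eta>"
    using measure_Un_le[OF events] by (simp add: hit_near_def hit_far_def)
qed

lemma uncovered_point_beyond_with_high_probability:
  assumes \<sigma>: "\<bar>\<sigma>\<bar> = 1" and "\<epsilon> > 0"
  shows "\<exists>B\<in>sets M. prob B \<le> \<epsilon> \<and> (AE \<omega> in M. \<omega> \<notin> B \<longrightarrow> (\<exists>y. a \<le> \<sigma> * y \<and> y \<notin> occupied (\<Phi> \<omega>) t))"
proof -
  define T where "T = t + 1"
  have "T > 0" "t < T"
    using t by (simp_all add: T_def)
  obtain c where "c \<ge> 0" and near_fin: "\<And>R y. emeasure (particle_intensity lam W) (near_reach T R y) < \<infinity>"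
    and near_le: "\<And>R y. measure (particle_intensity lam W) (near_reach T R y) \<le> c"
    using near_reach_intensity_bounded[OF BL \<open>T > 0\<close>] by blast
  have "1 - exp (- c) < 1"
    by simp
  then obtain n0 where "(1 - exp (- c)) ^ n0 < \<epsilon> / 2"
    using real_arch_pow_inv[OF half_gt_zero[OF \<open>\<epsilon> > 0\<close>]] by blast
  define n where "n = Suc n0"
  have "(1 - exp (- c)) ^ n < \<epsilon> / 2"
    using power_decreasing[of n0 n "1 - exp (- c)"] \<open>c \<ge> 0\<close> \<open>(1 - exp (- c)) ^ n0 < \<epsilon> / 2\<close>
    by (simp add: n_def)
  define \<eta> where "\<eta> = \<epsilon> / (2 * real n)"
  have "real n > 0"
    by (simp add: n_def)
  then have "\<eta> > 0" and "real n * \<eta> = \<epsilon> / 2"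
    using \<open>\<epsilon> > 0\<close> by (simp_all add: \<eta>_def)
  obtain R where "R \<ge> 0" and far_fin: "\<And>y. emeasure (particle_intensity lam W) (far_reach T R y) < \<infinity>"
    and far_le: "\<And>y. measure (particle_intensity lam W) (far_reach T R y) \<le> \<eta>"
    using far_reach_intensity_small[OF BL \<open>T > 0\<close> lam \<open>\<eta> > 0\<close>] by blast
  define y where "y k = \<sigma> * (a + (2 * R + 1) * real k)" for k
  define B where "B = (\<Inter>k<n. hit_event M \<Phi> (near_reach T R (y k))) \<union> (\<Union>k<n. hit_event M \<Phi> (far_reach T R (y k)))"
  note B_bounds = prob_spaced_points_hit_le[OF \<sigma> \<open>R \<ge> 0\<close> _ near_fin near_le far_fin far_le,
      of n a, folded y_def B_def]
  have "\<sigma> * \<sigma> = 1"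
    using abs_mult_self_eq[of \<sigma>] \<sigma> by simp
  then have beyond: "a \<le> \<sigma> * y k" for k
    using \<open>R \<ge> 0\<close> by (simp add: y_def mult.assoc[symmetric])
  have "AE \<omega> in M. \<forall>k\<in>{..<n}. \<omega> \<notin> hit_event M \<Phi> (near_reach T R (y k)) \<and>
      \<omega> \<notin> hit_event M \<Phi> (far_reach T R (y k)) \<longrightarrow> y k \<notin> occupied (\<Phi> \<omega>) t"
    by (intro AE_finite_allI AE_not_occupied_if_not_hit[OF \<open>t < T\<close> near_fin far_fin]) simp
  then have "AE \<omega> in M. \<omega> \<notin> B \<longrightarrow> (\<exists>y. a \<le> \<sigma> * y \<and> y \<notin> occupied (\<Phi> \<omega>) t)"
  proof eventually_elim
    case (elim \<omega>)
    show ?case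
    proof
      assume "\<omega> \<notin> B"
      then obtain k where "k < n" "\<omega> \<notin> hit_event M \<Phi> (near_reach T R (y k))"
          "\<omega> \<notin> hit_event M \<Phi> (far_reach T R (y k))"
        by (auto simp: B_def)
      with elim beyond show "\<exists>y. a \<le> \<sigma> * y \<and> y \<notin> occupied (\<Phi> \<omega>) t"
        by blast
    qed
  qed
  moreover have "B \<in> sets M" and "prob B \<le> \<epsilon>"
    using B_bounds \<open>(1 - exp (- c)) ^ n < \<epsilon> / 2\<close> \<open>real n * \<eta> = \<epsilon> / 2\<close> by (simp_all add: n_def)
  ultimately show ?thesis
    by blast
qed

lemma AE_uncovered_points_unbounded:
  assumes "\<bar>\<sigma>\<bar> = 1"
  shows "AE \<omega> in M. \<forall>b. \<exists>y. b \<le> \<sigma> * y \<and> y \<notin> occupied (\<Phi> \<omega>) t"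
proof -
  have "AE \<omega> in M. \<exists>y. real N \<le> \<sigma> * y \<and> y \<notin> occupied (\<Phi> \<omega>) t" for N :: nat
    by (rule AE_if_small_exceptional_sets) (rule uncovered_point_beyond_with_high_probability[OF assms])
  then have "AE \<omega> in M. \<forall>N::nat. \<exists>y. real N \<le> \<sigma> * y \<and> y \<notin> occupied (\<Phi> \<omega>) t"
    by (subst AE_all_countable) blast
  then show ?thesis
  proof eventually_elim
    case (elim \<omega>)
    show ?case
    proof
      fix b :: real
      obtain y where "real (nat \<lceil>b\<rceil>) \<le> \<sigma> * y" "y \<notin> occupied (\<Phi> \<omega>) t"
        using elim by blast
      moreover have "b \<le> real (nat \<lceil>b\<rceil>)"
        by (rule real_nat_ceiling_ge)
      ultimately show "\<exists>y. b \<le> \<sigma> * y \<and> y \<notin> occupied (\<Phi> \<omega>) t"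
        by (meson order_trans)
    qed
  qed
qed

end

theorem theorem1p1:
  fixes lam :: real
    and M :: "'w measure"
    and W :: "(real \<Rightarrow> real) measure"
    and \<Phi> :: "'w \<Rightarrow> (real \<times> (real \<Rightarrow> real)) set"
  assumes "lam > 0"
    and "brownian_law W"
    and "poisson_point_process M (borel \<Otimes>\<^sub>M PiM UNIV (\<lambda>_::real. borel))
           (density (lborel \<Otimes>\<^sub>M W) (\<lambda>_. ennreal lam)) \<Phi>"
    and "AE \<omega> in M. \<forall>(x, w)\<in>\<Phi> \<omega>. continuous_on {0..} w"
  shows "\<forall>t\<ge>0. AE \<omega> in M. \<not> has_unbounded_cluster (occupied (\<Phi> \<omega>) t)"
proof (intro allI impI)
  fix t :: real
  assume "t \<ge> 0"
  have "AE \<omega> in M. \<forall>b. \<exists>y. b \<le> y \<and> y \<notin> occupied (\<Phi> \<omega>) t"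
    using AE_uncovered_points_unbounded[OF assms \<open>t \<ge> 0\<close>, of 1] by simp
  moreover have "AE \<omega> in M. \<forall>b. \<exists>y. b \<le> - y \<and> y \<notin> occupied (\<Phi> \<omega>) t"
    using AE_uncovered_points_unbounded[OF assms \<open>t \<ge> 0\<close>, of "-1"] by simp
  ultimately show "AE \<omega> in M. \<not> has_unbounded_cluster (occupied (\<Phi> \<omega>) t)"
    by eventually_elim (intro not_has_unbounded_cluster, blast, meson neg_le_iff_le)
qed

end
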